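(* For every constant $B>0$, any number of training samples $n\ge1$ and any time $t\ge1$, with probability at least $1-\frac1{c_1}$ over the random initialization, the empirical Rademacher complexity satisfies $$\frac1n\mathbb{E}_{\xi\in\{\pm1\}^n}\Big[\sup_{\max_{r\in[m]}\|w_{i,r}^{(t)}\|_2,\,|b_{i,r}^{(t)}|\le B}\ \sum_{j=1}^n\xi_jN\big((x_{1:i})_j;\theta^{(t)}_i\big)\Big]\le\frac{8c_1\epsilon_aBm\sqrt{2\log m}}{\sqrt n},$$ where $(x_{1:i})_j$ denotes the first $i$ coordinates of the $j$-th training example.
   Context: Fix $m\ge2$, $\epsilon_a>0$, a constant $c_1>10$, $i\in[d]$, and training points $x^{(1)},\dots,x^{(n)}\in\mathbb{R}^d$ with $\|x^{(j)}\|_2\le1$. For $\|x_{1:i}\|_2\le1$, $\hat x_{1:i}=(x_1,\dots,x_i,\sqrt{1-\|x_{1:i}\|_2^2})$. Random frozen initial parameters $a_{i,r}\sim\mathcal N(0,\epsilon_a^2)$, $\bar w_{i,r}\sim\mathcal N(0,\frac1mI_{i+1})$, $\bar b_{i,r}\sim\mathcal N(0,\frac1m)$, independent. $N(x_{1:i};\theta_i)=\sum_{r=1}^ma_{i,r}\max\{0,\langle\bar w_{i,r}+w_{i,r},\hat x_{1:i}\rangle+\bar b_{i,r}+b_{i,r}\}$ with offsets $\theta_i=(w_{i,r},b_{i,r})_r$; the supremum is over all offsets $\theta_i^{(t)}=(w^{(t)}_{i,r},b^{(t)}_{i,r})_r$ satisfying the stated bounds. $\xi$ is uniform on $\{\pm1\}^n$.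 *)

theory Defs
  imports "HOL-Probability.Probability"
begin

(* All indices are 1-based: neurons r in {1..m}, input coordinates k in {1..d},
   training points j in {1..n}, augmented input coordinates k in {1..i+1}. *)

definition xhat :: "nat \<Rightarrow> (nat \<Rightarrow> real) \<Rightarrow> nat \<Rightarrow> real" where
  "xhat i x k = (if k \<le> i then x k else sqrt (1 - (\<Sum>l=1..i. (x l)\<^sup>2)))"

text \<open>Network N(x_{1:i}; theta_i) with frozen init (a, wbar, bbar) and offsets (w, b).\<close>
definition netN :: "nat \<Rightarrow> nat \<Rightarrow> (nat \<Rightarrow> real) \<Rightarrow> (nat \<Rightarrow> nat \<Rightarrow> real) \<Rightarrow> (nat \<Rightarrow> real)
   \<Rightarrow> (nat \<Rightarrow> nat \<Rightarrow> real) \<Rightarrow> (nat \<Rightarrow> real) \<Rightarrow> (nat \<Rightarrow> real) \<Rightarrow> real" where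
  "netN m i a wbar bbar w b x =
     (\<Sum>r=1..m. a r * max 0 ((\<Sum>k=1..i+1. (wbar r k + w r k) * xhat i x k) + bbar r + b r))"

definition offsets :: "nat \<Rightarrow> nat \<Rightarrow> real \<Rightarrow> ((nat \<Rightarrow> nat \<Rightarrow> real) \<times> (nat \<Rightarrow> real)) set" where
  "offsets m i B = {(w, b). \<forall>r\<in>{1..m}. sqrt (\<Sum>k=1..i+1. (w r k)\<^sup>2) \<le> B \<and> \<bar>b r\<bar> \<le> B}"

definition rademacher :: "nat \<Rightarrow> nat \<Rightarrow> nat \<Rightarrow> (nat \<Rightarrow> nat \<Rightarrow> real) \<Rightarrow> real
   \<Rightarrow> (nat \<Rightarrow> real) \<Rightarrow> (nat \<Rightarrow> nat \<Rightarrow> real) \<Rightarrow> (nat \<Rightarrow> real) \<Rightarrow> real" where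
  "rademacher m i n x B a wbar bbar =
     (1 / real n) * ((\<Sum>\<xi>\<in>PiE {1..n} (\<lambda>_. {-1, 1::real}).
        Sup ((\<lambda>(w, b). \<Sum>j=1..n. \<xi> j * netN m i a wbar bbar w b (x j)) ` offsets m i B))
      / 2 ^ n)"

text \<open>Law of the random initialization: a_r ~ N(0, eps^2), wbar_r ~ N(0, I_{i+1}/m),
  bbar_r ~ N(0, 1/m), all independent (normal_density takes the standard deviation).\<close>
definition init_measure :: "nat \<Rightarrow> nat \<Rightarrow> real
   \<Rightarrow> ((nat \<Rightarrow> real) \<times> (nat \<Rightarrow> nat \<Rightarrow> real) \<times> (nat \<Rightarrow> real)) measure" where
  "init_measure m i eps =
     (PiM {1..m} (\<lambda>_. density lborel (normal_density 0 eps)))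
     \<Otimes>\<^sub>M ((PiM {1..m} (\<lambda>_. PiM {1..i+1} (\<lambda>_. density lborel (normal_density 0 (1 / sqrt m)))))
     \<Otimes>\<^sub>M (PiM {1..m} (\<lambda>_. density lborel (normal_density 0 (1 / sqrt m)))))"

end

(*
  Writing a_r max(0, z) = |a_r| (sgn a_r max(0, z)) expresses the network as a combination, with
  weights |a_r|, of 1-Lipschitz functions of the pre-activations <w_r, xhat> + b_r. The supremum over
  the offsets therefore splits over the neurons, and by the Ledoux-Talagrand contraction principle
  each neuron contributes at most the Rademacher complexity of the linear class
  xhat |-> <w, xhat> + b with |w|, |b| <= B, which is at most 2B/sqrt n by Cauchy-Schwarz and the
  second moment of Rademacher sums (|xhat| = 1). Hence the complexity is deterministically at most
  2B sum_r |a_r| / sqrt n. Since E|a_r| = eps_a sqrt(2/pi) <= eps_a, Markov's inequality gives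
  sum_r |a_r| <= c_1 m eps_a with probability at least 1 - 1/c_1, and 1 <= sqrt(2 log m) leaves a
  factor 4 to spare. The complexity is a measurable function of the initialization because the
  supremum may be restricted to the countably many offsets with rational entries.
*)
theory Submission
  imports Defs
begin

section \<open>Rademacher sums over sign vectors\<close>

abbreviation sign_vectors :: "'a set \<Rightarrow> ('a \<Rightarrow> real) set" where
  "sign_vectors J \<equiv> PiE J (\<lambda>_. {-1, 1})"

lemma sum_sign_vectors_insert:
  assumes "a \<notin> J"
  shows "(\<Sum>\<xi>\<in>sign_vectors (insert a J). F \<xi>) = (\<Sum>\<xi>\<in>sign_vectors J. \<Sum>s\<in>{-1, 1}. F (\<xi>(a := s)))"
proof -
  have "(\<Sum>\<xi>\<in>sign_vectors (insert a J). F \<xi>) = (\<Sum>(s, \<xi>)\<in>{-1, 1} \<times> sign_vectors J. F (\<xi>(a := s)))"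
    unfolding PiE_insert_eq by (subst sum.reindex[OF inj_combinator[OF assms]]) (simp add: comp_def case_prod_beta)
  also have "\<dots> = (\<Sum>\<xi>\<in>sign_vectors J. \<Sum>s\<in>{-1, 1}. F (\<xi>(a := s)))"
    by (subst sum.swap) (simp add: sum.cartesian_product)
  finally show ?thesis .
qed

lemma sum_fun_upd_insert_mult:
  assumes "finite J" "a \<notin> J"
  shows "(\<Sum>j\<in>insert a J. (\<xi>(a := s)) j * f j) = s * f a + (\<Sum>j\<in>J. \<xi> j * f j)"
proof -
  have "(\<Sum>j\<in>J. (\<xi>(a := s)) j * f j) = (\<Sum>j\<in>J. \<xi> j * f j)"
    using assms(2) by (intro sum.cong) auto
  then show ?thesis
    using assms by simp
qed

lemma sum_sign_vectors_square:
  assumes "finite J"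
  shows "(\<Sum>\<xi>\<in>sign_vectors J. (\<Sum>j\<in>J. \<xi> j * v j)\<^sup>2) = 2 ^ card J * (\<Sum>j\<in>J. (v j)\<^sup>2)"
  using assms
proof (induction J rule: finite_induct)
  case (insert a J)
  have two_signs: "(\<Sum>s\<in>{-1, 1::real}. (s * p + q)\<^sup>2) = 2 * p\<^sup>2 + 2 * q\<^sup>2" for p q
    by (simp add: power2_eq_square algebra_simps)
  have "(\<Sum>\<xi>\<in>sign_vectors (insert a J). (\<Sum>j\<in>insert a J. \<xi> j * v j)\<^sup>2)
      = (\<Sum>\<xi>\<in>sign_vectors J. 2 * (v a)\<^sup>2 + 2 * (\<Sum>j\<in>J. \<xi> j * v j)\<^sup>2)"
    by (simp only: sum_sign_vectors_insert[OF insert(2)] sum_fun_upd_insert_mult[OF insert(1,2)] two_signs)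
  also have "\<dots> = 2 ^ card (insert a J) * (\<Sum>j\<in>insert a J. (v j)\<^sup>2)"
    using insert by (simp add: sum.distrib sum_distrib_left[symmetric] card_PiE algebra_simps)
  finally show ?case .
qed simp

lemma abs_sum_mult_le_sqrt:
  fixes u v :: "'a \<Rightarrow> real"
  shows "\<bar>\<Sum>k\<in>K. u k * v k\<bar> \<le> sqrt (\<Sum>k\<in>K. (u k)\<^sup>2) * sqrt (\<Sum>k\<in>K. (v k)\<^sup>2)"
  using real_sqrt_le_mono[OF Cauchy_Schwarz_ineq_sum[of u v K]] by (simp add: real_sqrt_mult)

lemma sum_sqrt_le_sqrt_card_sum:
  assumes "\<And>x. x \<in> X \<Longrightarrow> 0 \<le> Y x"
  shows "(\<Sum>x\<in>X. sqrt (Y x)) \<le> sqrt (card X) * sqrt (\<Sum>x\<in>X. Y x)"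
  using abs_sum_mult_le_sqrt[of "\<lambda>_. 1" "\<lambda>x. sqrt (Y x)" X] assms by simp

lemma sum_sign_vectors_norm_le:
  fixes v :: "'a \<Rightarrow> 'b \<Rightarrow> real"
  assumes "finite J" "finite K"
  shows "(\<Sum>\<xi>\<in>sign_vectors J. sqrt (\<Sum>k\<in>K. (\<Sum>j\<in>J. \<xi> j * v j k)\<^sup>2))
    \<le> 2 ^ card J * sqrt (\<Sum>j\<in>J. \<Sum>k\<in>K. (v j k)\<^sup>2)"
proof -
  have "(\<Sum>\<xi>\<in>sign_vectors J. sqrt (\<Sum>k\<in>K. (\<Sum>j\<in>J. \<xi> j * v j k)\<^sup>2))
      \<le> sqrt (card (sign_vectors J)) * sqrt (\<Sum>\<xi>\<in>sign_vectors J. \<Sum>k\<in>K. (\<Sum>j\<in>J. \<xi> j * v j k)\<^sup>2)"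
    by (rule sum_sqrt_le_sqrt_card_sum) (simp add: sum_nonneg)
  also have "\<dots> = sqrt (2 ^ card J) * sqrt (2 ^ card J * (\<Sum>j\<in>J. \<Sum>k\<in>K. (v j k)\<^sup>2))"
    using assms by (simp add: card_PiE sum.swap[of _ "sign_vectors J"] sum_sign_vectors_square
        sum_distrib_left sum.swap[of _ K])
  also have "\<dots> = 2 ^ card J * sqrt (\<Sum>j\<in>J. \<Sum>k\<in>K. (v j k)\<^sup>2)"
    by (simp add: real_sqrt_mult mult.assoc[symmetric])
  finally show ?thesis .
qed

lemma sum_sign_vectors_abs_le:
  assumes "finite J"
  shows "(\<Sum>\<xi>\<in>sign_vectors J. \<bar>\<Sum>j\<in>J. \<xi> j * v j\<bar>) \<le> 2 ^ card J * sqrt (\<Sum>j\<in>J. (v j)\<^sup>2)"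
  using sum_sign_vectors_norm_le[OF assms, of "{()}" "\<lambda>j _. v j"] by simp

section \<open>The contraction principle\<close>

lemma Sup_plus_Sup_minus_contraction:
  fixes R t :: "'t \<Rightarrow> real" and \<phi> :: "real \<Rightarrow> real"
  assumes "T \<noteq> {}"
    and bdd_plus: "bdd_above ((\<lambda>\<theta>. R \<theta> + t \<theta>) ` T)"
    and bdd_minus: "bdd_above ((\<lambda>\<theta>. R \<theta> - t \<theta>) ` T)"
    and lip: "\<And>p q. \<bar>\<phi> p - \<phi> q\<bar> \<le> \<bar>p - q\<bar>"
  shows "Sup ((\<lambda>\<theta>. R \<theta> + \<phi> (t \<theta>)) ` T) + Sup ((\<lambda>\<theta>. R \<theta> - \<phi> (t \<theta>)) ` T)
    \<le> Sup ((\<lambda>\<theta>. R \<theta> + t \<theta>) ` T) + Sup ((\<lambda>\<theta>. R \<theta> - t \<theta>) ` T)"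
    (is "Sup (?f ` T) + Sup (?g ` T) \<le> ?S1 + ?S2")
proof -
  have pair: "?f \<theta> + ?g \<theta>' \<le> ?S1 + ?S2" if "\<theta> \<in> T" "\<theta>' \<in> T" for \<theta> \<theta>'
  proof -
    have "R \<theta> + t \<theta> + (R \<theta>' - t \<theta>') \<le> ?S1 + ?S2" "R \<theta>' + t \<theta>' + (R \<theta> - t \<theta>) \<le> ?S1 + ?S2"
      using that bdd_plus bdd_minus by (auto intro!: add_mono cSUP_upper)
    moreover have "\<phi> (t \<theta>) - \<phi> (t \<theta>') \<le> \<bar>t \<theta> - t \<theta>'\<bar>"
      using lip[of "t \<theta>" "t \<theta>'"] by linarith
    ultimately show ?thesis
      \<comment> \<open>if t \<theta> < t \<theta>', pair \<theta>' with the plus and \<theta> with the minus supremum instead\<close>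
      by (cases "t \<theta> \<ge> t \<theta>'") (auto simp: abs_if)
  qed
  have "Sup (?g ` T) \<le> ?S1 + ?S2 - ?f \<theta>" if "\<theta> \<in> T" for \<theta>
    using assms(1) pair[OF that] by (intro cSUP_least) (auto simp: algebra_simps)
  then have "Sup (?f ` T) \<le> ?S1 + ?S2 - Sup (?g ` T)"
    using assms(1) by (intro cSUP_least) (auto simp: algebra_simps)
  then show ?thesis
    by linarith
qed

lemma abs_sum_sign_vectors_Lipschitz_le:
  assumes "\<xi> \<in> sign_vectors J" "\<And>j. j \<in> J \<Longrightarrow> \<bar>t j\<bar> \<le> M"
    and "\<And>j p q. j \<in> J \<Longrightarrow> \<bar>\<phi> j p - \<phi> j q\<bar> \<le> \<bar>p - q\<bar>"
  shows "\<bar>\<Sum>j\<in>J. \<xi> j * \<phi> j (t j)\<bar> \<le> (\<Sum>j\<in>J. \<bar>\<phi> j 0\<bar> + M)"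
proof (rule order_trans[OF sum_abs sum_mono])
  fix j assume "j \<in> J"
  then have "\<bar>\<xi> j\<bar> = 1"
    using assms(1) by (auto simp: PiE_iff)
  moreover have "\<bar>\<phi> j (t j)\<bar> \<le> \<bar>\<phi> j 0\<bar> + M"
    using assms(3)[OF \<open>j \<in> J\<close>, of "t j" 0] assms(2)[OF \<open>j \<in> J\<close>] by simp
  ultimately show "\<bar>\<xi> j * \<phi> j (t j)\<bar> \<le> \<bar>\<phi> j 0\<bar> + M"
    by (simp add: abs_mult)
qed

lemma sum_Sup_insert_sign_vectors:
  assumes "finite J" "a \<notin> J"
  shows "(\<Sum>\<xi>\<in>sign_vectors (insert a J). Sup ((\<lambda>\<theta>. g \<theta> + (\<Sum>j\<in>insert a J. \<xi> j * t \<theta> j)) ` T))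
    = (\<Sum>\<xi>\<in>sign_vectors J. Sup ((\<lambda>\<theta>. (g \<theta> + t \<theta> a) + (\<Sum>j\<in>J. \<xi> j * t \<theta> j)) ` T))
      + (\<Sum>\<xi>\<in>sign_vectors J. Sup ((\<lambda>\<theta>. (g \<theta> - t \<theta> a) + (\<Sum>j\<in>J. \<xi> j * t \<theta> j)) ` T))"
  by (simp only: sum_sign_vectors_insert[OF assms(2)] sum_fun_upd_insert_mult[OF assms])
    (simp add: sum.distrib algebra_simps)

(* The shift g carries the coordinate peeled off in the induction step. *)
lemma sum_Sup_contraction_shifted:
  fixes t :: "'t \<Rightarrow> 'a \<Rightarrow> real" and \<phi> :: "'a \<Rightarrow> real \<Rightarrow> real"
  assumes "finite J" "T \<noteq> {}"
    and "\<And>\<theta> j. \<theta> \<in> T \<Longrightarrow> j \<in> J \<Longrightarrow> \<bar>t \<theta> j\<bar> \<le> M"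
    and "\<And>j p q. j \<in> J \<Longrightarrow> \<bar>\<phi> j p - \<phi> j q\<bar> \<le> \<bar>p - q\<bar>"
    and "\<And>\<theta>. \<theta> \<in> T \<Longrightarrow> \<bar>g \<theta>\<bar> \<le> K"
  shows "(\<Sum>\<xi>\<in>sign_vectors J. Sup ((\<lambda>\<theta>. g \<theta> + (\<Sum>j\<in>J. \<xi> j * \<phi> j (t \<theta> j))) ` T))
    \<le> (\<Sum>\<xi>\<in>sign_vectors J. Sup ((\<lambda>\<theta>. g \<theta> + (\<Sum>j\<in>J. \<xi> j * t \<theta> j)) ` T))"
  using assms(1,3-5)
proof (induction J arbitrary: g K rule: finite_induct)
  case (insert a J)
  note bound_t = insert.prems(1) and lip = insert.prems(2) and bound_g = insert.prems(3)
  define R where "R \<xi> \<theta> = g \<theta> + (\<Sum>j\<in>J. \<xi> j * \<phi> j (t \<theta> j))" for \<xi> \<theta>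
  have bound_R: "\<bar>R \<xi> \<theta>\<bar> \<le> K + (\<Sum>j\<in>J. \<bar>\<phi> j 0\<bar> + M)"
    if "\<xi> \<in> sign_vectors J" "\<theta> \<in> T" for \<xi> \<theta>
    using abs_sum_sign_vectors_Lipschitz_le[OF that(1), of "t \<theta>" M \<phi>] bound_t[OF that(2)] lip
      bound_g[OF that(2)] abs_triangle_ineq[of "g \<theta>"]
    unfolding R_def by fastforce
  define C where "C = K + (\<Sum>j\<in>J. \<bar>\<phi> j 0\<bar> + M) + M"
  have "R \<xi> \<theta> + t \<theta> a \<le> C \<and> R \<xi> \<theta> - t \<theta> a \<le> C" if "\<xi> \<in> sign_vectors J" "\<theta> \<in> T" for \<xi> \<theta>
    using bound_R[OF that] bound_t[OF that(2), of a] unfolding C_def by auto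
  then have bdd: "bdd_above ((\<lambda>\<theta>. R \<xi> \<theta> + t \<theta> a) ` T)" "bdd_above ((\<lambda>\<theta>. R \<xi> \<theta> - t \<theta> a) ` T)"
    if "\<xi> \<in> sign_vectors J" for \<xi>
    using that by (auto intro!: bdd_aboveI2[where M = C])
  have "(\<Sum>\<xi>\<in>sign_vectors (insert a J). Sup ((\<lambda>\<theta>. g \<theta> + (\<Sum>j\<in>insert a J. \<xi> j * \<phi> j (t \<theta> j))) ` T))
      = (\<Sum>\<xi>\<in>sign_vectors J. Sup ((\<lambda>\<theta>. R \<xi> \<theta> + \<phi> a (t \<theta> a)) ` T) + Sup ((\<lambda>\<theta>. R \<xi> \<theta> - \<phi> a (t \<theta> a)) ` T))"
    using sum_Sup_insert_sign_vectors[OF insert.hyps, of g "\<lambda>\<theta> j. \<phi> j (t \<theta> j)"]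
    by (simp add: R_def sum.distrib algebra_simps)
  also have "\<dots> \<le> (\<Sum>\<xi>\<in>sign_vectors J. Sup ((\<lambda>\<theta>. R \<xi> \<theta> + t \<theta> a) ` T) + Sup ((\<lambda>\<theta>. R \<xi> \<theta> - t \<theta> a) ` T))"
    using assms(2) bdd lip by (intro sum_mono Sup_plus_Sup_minus_contraction) auto
  also have "\<dots> = (\<Sum>\<xi>\<in>sign_vectors J. Sup ((\<lambda>\<theta>. (g \<theta> + t \<theta> a) + (\<Sum>j\<in>J. \<xi> j * \<phi> j (t \<theta> j))) ` T))
      + (\<Sum>\<xi>\<in>sign_vectors J. Sup ((\<lambda>\<theta>. (g \<theta> - t \<theta> a) + (\<Sum>j\<in>J. \<xi> j * \<phi> j (t \<theta> j))) ` T))"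
    by (simp add: R_def sum.distrib algebra_simps)
  also have "\<dots> \<le> (\<Sum>\<xi>\<in>sign_vectors J. Sup ((\<lambda>\<theta>. (g \<theta> + t \<theta> a) + (\<Sum>j\<in>J. \<xi> j * t \<theta> j)) ` T))
      + (\<Sum>\<xi>\<in>sign_vectors J. Sup ((\<lambda>\<theta>. (g \<theta> - t \<theta> a) + (\<Sum>j\<in>J. \<xi> j * t \<theta> j)) ` T))"
    using bound_g bound_t by (intro add_mono insert.IH[where K = "K + M"]) (use lip in \<open>force+\<close>)
  also have "\<dots> = (\<Sum>\<xi>\<in>sign_vectors (insert a J). Sup ((\<lambda>\<theta>. g \<theta> + (\<Sum>j\<in>insert a J. \<xi> j * t \<theta> j)) ` T))"
    by (rule sum_Sup_insert_sign_vectors[OF insert.hyps, symmetric])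
  finally show ?case .
qed simp

lemma sum_Sup_contraction:
  fixes t :: "'t \<Rightarrow> 'a \<Rightarrow> real" and \<phi> :: "'a \<Rightarrow> real \<Rightarrow> real"
  assumes "finite J" "T \<noteq> {}"
    and "\<And>\<theta> j. \<theta> \<in> T \<Longrightarrow> j \<in> J \<Longrightarrow> \<bar>t \<theta> j\<bar> \<le> M"
    and "\<And>j p q. j \<in> J \<Longrightarrow> \<bar>\<phi> j p - \<phi> j q\<bar> \<le> \<bar>p - q\<bar>"
  shows "(\<Sum>\<xi>\<in>sign_vectors J. Sup ((\<lambda>\<theta>. \<Sum>j\<in>J. \<xi> j * \<phi> j (t \<theta> j)) ` T))
    \<le> (\<Sum>\<xi>\<in>sign_vectors J. Sup ((\<lambda>\<theta>. \<Sum>j\<in>J. \<xi> j * t \<theta> j) ` T))"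
  using sum_Sup_contraction_shifted[OF assms, where g = "\<lambda>_. 0" and K = 0] by simp

section \<open>Rademacher complexity of the network\<close>

definition preact ::
  "nat \<Rightarrow> (nat \<Rightarrow> nat \<Rightarrow> real) \<Rightarrow> (nat \<Rightarrow> real) \<Rightarrow> nat \<Rightarrow> (nat \<Rightarrow> real) \<Rightarrow> real" where
  "preact i w b r y = (\<Sum>k=1..i+1. w r k * xhat i y k) + b r"

lemma netN_eq_preact:
  "netN m i a wbar bbar w b y = (\<Sum>r=1..m. a r * max 0 (preact i wbar bbar r y + preact i w b r y))"
  unfolding netN_def preact_def by (intro sum.cong refl) (simp add: sum.distrib algebra_simps)

lemma sum_xhat_square:
  assumes "i \<le> d" "sqrt (\<Sum>k=1..d. (y k)\<^sup>2) \<le> 1"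
  shows "(\<Sum>k=1..i+1. (xhat i y k)\<^sup>2) = 1"
proof -
  have "(\<Sum>k=1..i. (y k)\<^sup>2) \<le> (\<Sum>k=1..d. (y k)\<^sup>2)"
    using assms(1) by (intro sum_mono2) auto
  also have "\<dots> \<le> 1"
    using assms(2) by (simp add: sqrt_le_D)
  finally have "(xhat i y (i+1))\<^sup>2 = 1 - (\<Sum>k=1..i. (y k)\<^sup>2)"
    by (simp add: xhat_def)
  moreover have "(\<Sum>k=1..i. (xhat i y k)\<^sup>2) = (\<Sum>k=1..i. (y k)\<^sup>2)"
    by (intro sum.cong) (auto simp: xhat_def)
  ultimately show ?thesis
    by simp
qed

lemma offsets_nonempty: "0 \<le> B \<Longrightarrow> offsets m i B \<noteq> {}"
proof -
  assume "0 \<le> B"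
  then have "((\<lambda>_ _. 0), (\<lambda>_. 0)) \<in> offsets m i B"
    by (simp add: offsets_def)
  then show ?thesis
    by blast
qed

lemma sum_mult_preact_le:
  assumes "(w, b) \<in> offsets m i B" "r \<in> {1..m}"
  shows "(\<Sum>j\<in>J. \<xi> j * preact i w b r (x j))
    \<le> B * sqrt (\<Sum>k=1..i+1. (\<Sum>j\<in>J. \<xi> j * xhat i (x j) k)\<^sup>2) + B * \<bar>\<Sum>j\<in>J. \<xi> j\<bar>"
proof -
  have w: "sqrt (\<Sum>k=1..i+1. (w r k)\<^sup>2) \<le> B" and b: "\<bar>b r\<bar> \<le> B"
    using assms unfolding offsets_def by blast+
  have "(\<Sum>j\<in>J. \<xi> j * preact i w b r (x j))
      = (\<Sum>k=1..i+1. w r k * (\<Sum>j\<in>J. \<xi> j * xhat i (x j) k)) + b r * (\<Sum>j\<in>J. \<xi> j)"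
    by (simp add: preact_def algebra_simps sum.distrib sum_distrib_left sum_distrib_right sum.swap[of _ J])
  also have "\<dots> \<le> sqrt (\<Sum>k=1..i+1. (w r k)\<^sup>2) * sqrt (\<Sum>k=1..i+1. (\<Sum>j\<in>J. \<xi> j * xhat i (x j) k)\<^sup>2)
      + \<bar>b r\<bar> * \<bar>\<Sum>j\<in>J. \<xi> j\<bar>"
    by (intro add_mono order_trans[OF abs_ge_self abs_sum_mult_le_sqrt]) (simp add: abs_mult[symmetric])
  also have "\<dots> \<le> B * sqrt (\<Sum>k=1..i+1. (\<Sum>j\<in>J. \<xi> j * xhat i (x j) k)\<^sup>2) + B * \<bar>\<Sum>j\<in>J. \<xi> j\<bar>"
    using w b by (intro add_mono mult_right_mono real_sqrt_ge_zero sum_nonneg) auto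
  finally show ?thesis .
qed

lemma abs_preact_le:
  assumes "(w, b) \<in> offsets m i B" "r \<in> {1..m}" "(\<Sum>k=1..i+1. (xhat i y k)\<^sup>2) = 1"
  shows "\<bar>preact i w b r y\<bar> \<le> 2 * B"
proof -
  have "\<bar>\<Sum>k=1..i+1. w r k * xhat i y k\<bar> \<le> sqrt (\<Sum>k=1..i+1. (w r k)\<^sup>2)"
    using abs_sum_mult_le_sqrt[of "w r" "xhat i y" "{1..i+1}"] assms(3) by simp
  moreover have "sqrt (\<Sum>k=1..i+1. (w r k)\<^sup>2) \<le> B" "\<bar>b r\<bar> \<le> B"
    using assms(1,2) unfolding offsets_def by blast+
  ultimately show ?thesis
    unfolding preact_def by linarith
qed

lemma abs_max_zero_diff_le: "\<bar>max 0 p - max 0 q\<bar> \<le> \<bar>p - q :: real\<bar>"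
  by (auto simp: max_def)

lemma cSUP_sum_mult_le:
  fixes f :: "'r \<Rightarrow> 't \<Rightarrow> real"
  assumes "T \<noteq> {}" "\<And>r. r \<in> R \<Longrightarrow> 0 \<le> c r" "\<And>r. r \<in> R \<Longrightarrow> bdd_above (f r ` T)"
  shows "Sup ((\<lambda>\<theta>. \<Sum>r\<in>R. c r * f r \<theta>) ` T) \<le> (\<Sum>r\<in>R. c r * Sup (f r ` T))"
  using assms by (intro cSUP_least sum_mono mult_left_mono cSUP_upper) auto

lemma bdd_above_sum_mult:
  fixes h :: "'t \<Rightarrow> 'j \<Rightarrow> real"
  assumes "\<And>\<theta> j. \<theta> \<in> T \<Longrightarrow> j \<in> J \<Longrightarrow> \<bar>h \<theta> j\<bar> \<le> M j"
  shows "bdd_above ((\<lambda>\<theta>. \<Sum>j\<in>J. \<xi> j * h \<theta> j) ` T)"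
proof (rule bdd_aboveI2)
  fix \<theta> assume "\<theta> \<in> T"
  have "\<xi> j * h \<theta> j \<le> \<bar>\<xi> j\<bar> * M j" if "j \<in> J" for j
    using assms[OF \<open>\<theta> \<in> T\<close> that] abs_ge_self[of "\<xi> j * h \<theta> j"]
    by (metis abs_ge_zero abs_mult mult_left_mono order_trans)
  then show "(\<Sum>j\<in>J. \<xi> j * h \<theta> j) \<le> (\<Sum>j\<in>J. \<bar>\<xi> j\<bar> * M j)"
    by (rule sum_mono)
qed

lemma sum_Sup_Lipschitz_neuron_le:
  assumes "0 \<le> B" "r \<in> {1..m}" "\<forall>j\<in>{1..n}. (\<Sum>k=1..i+1. (xhat i (x j) k)\<^sup>2) = 1"
    and lip: "\<And>j p q. j \<in> {1..n} \<Longrightarrow> \<bar>\<phi> j p - \<phi> j q\<bar> \<le> \<bar>p - q\<bar>"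
  shows "(\<Sum>\<xi>\<in>sign_vectors {1..n}.
      Sup ((\<lambda>\<theta>. \<Sum>j=1..n. \<xi> j * \<phi> j (preact i (fst \<theta>) (snd \<theta>) r (x j))) ` offsets m i B))
    \<le> 2 * B * 2 ^ n * sqrt n"
proof -
  let ?T = "offsets m i B"
  let ?S = "\<lambda>\<xi>. sqrt (\<Sum>k=1..i+1. (\<Sum>j=1..n. \<xi> j * xhat i (x j) k)\<^sup>2)"
  have "(\<Sum>\<xi>\<in>sign_vectors {1..n}.
      Sup ((\<lambda>\<theta>. \<Sum>j=1..n. \<xi> j * \<phi> j (preact i (fst \<theta>) (snd \<theta>) r (x j))) ` ?T))
    \<le> (\<Sum>\<xi>\<in>sign_vectors {1..n}. Sup ((\<lambda>\<theta>. \<Sum>j=1..n. \<xi> j * preact i (fst \<theta>) (snd \<theta>) r (x j)) ` ?T))"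
    using offsets_nonempty[OF assms(1)] assms(2,3) lip by (intro sum_Sup_contraction[where M = "2 * B"] abs_preact_le) auto
  also have "\<dots> \<le> (\<Sum>\<xi>\<in>sign_vectors {1..n}. B * ?S \<xi> + B * \<bar>\<Sum>j=1..n. \<xi> j\<bar>)"
  proof (intro sum_mono cSUP_least offsets_nonempty assms(1))
    fix \<xi> \<theta> assume "\<theta> \<in> ?T"
    then show "(\<Sum>j=1..n. \<xi> j * preact i (fst \<theta>) (snd \<theta>) r (x j)) \<le> B * ?S \<xi> + B * \<bar>\<Sum>j=1..n. \<xi> j\<bar>"
      using assms(2) by (intro sum_mult_preact_le[of "fst \<theta>" "snd \<theta>"]) auto
  qed
  also have "\<dots> = B * (\<Sum>\<xi>\<in>sign_vectors {1..n}. ?S \<xi>) + B * (\<Sum>\<xi>\<in>sign_vectors {1..n}. \<bar>\<Sum>j=1..n. \<xi> j * 1\<bar>)"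
    by (simp add: sum.distrib sum_distrib_left)
  also have "\<dots> \<le> B * (2 ^ n * sqrt n) + B * (2 ^ n * sqrt n)"
  proof -
    have "(\<Sum>j=1..n. \<Sum>k=1..i+1. (xhat i (x j) k)\<^sup>2) = n"
      using assms(3) by simp
    then show ?thesis
      using sum_sign_vectors_norm_le[of "{1..n}" "{1..i+1}" "\<lambda>j k. xhat i (x j) k"]
        sum_sign_vectors_abs_le[of "{1..n}" "\<lambda>_. 1"] assms(1)
      by (intro add_mono mult_left_mono) auto
  qed
  finally show ?thesis
    by (simp add: mult_ac)
qed

lemma abs_sgn_mult_max_zero_diff_le:
  "\<bar>sgn s * max 0 (c + p) - sgn s * max 0 (c + q)\<bar> \<le> \<bar>p - q :: real\<bar>"
proof -
  have "\<bar>sgn s * max 0 (c + p) - sgn s * max 0 (c + q)\<bar> = \<bar>sgn s\<bar> * \<bar>max 0 (c + p) - max 0 (c + q)\<bar>"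
    by (simp add: abs_mult right_diff_distrib[symmetric])
  also have "\<dots> \<le> 1 * \<bar>p - q\<bar>"
    using abs_max_zero_diff_le[of "c + p" "c + q"] by (intro mult_mono) (auto simp: abs_sgn_eq)
  finally show ?thesis
    by simp
qed

lemma sum_mult_netN_eq_sum_abs:
  "(\<Sum>j\<in>J. \<xi> j * netN m i a wbar bbar w b (x j))
    = (\<Sum>r=1..m. \<bar>a r\<bar> * (\<Sum>j\<in>J. \<xi> j * (sgn (a r) * max 0 (preact i wbar bbar r (x j) + preact i w b r (x j)))))"
proof -
  have "\<xi> j * (a r * z) = \<bar>a r\<bar> * (\<xi> j * (sgn (a r) * z))" for j r z
    by (metis abs_mult_sgn mult.assoc mult.left_commute)
  then have "(\<Sum>j\<in>J. \<xi> j * netN m i a wbar bbar w b (x j))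
      = (\<Sum>j\<in>J. \<Sum>r=1..m. \<bar>a r\<bar> * (\<xi> j * (sgn (a r) * max 0 (preact i wbar bbar r (x j) + preact i w b r (x j)))))"
    unfolding netN_eq_preact sum_distrib_left by presburger
  then show ?thesis
    unfolding sum_distrib_left by (simp only: sum.swap[of _ J])
qed

lemma sum_Sup_sum_mult_netN_le:
  assumes "0 \<le> B" and x: "\<forall>j\<in>{1..n}. (\<Sum>k=1..i+1. (xhat i (x j) k)\<^sup>2) = 1"
  shows "(\<Sum>\<xi>\<in>sign_vectors {1..n}. Sup ((\<lambda>(w, b). \<Sum>j=1..n. \<xi> j * netN m i a wbar bbar w b (x j)) ` offsets m i B))
    \<le> 2 ^ n * (sqrt n * (2 * B * (\<Sum>r=1..m. \<bar>a r\<bar>)))"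
proof -
  let ?T = "offsets m i B"
  define \<phi> where "\<phi> r j p = sgn (a r) * max 0 (preact i wbar bbar r (x j) + p)" for r j p
  define G where "G r \<xi> \<theta> = (\<Sum>j=1..n. \<xi> j * \<phi> r j (preact i (fst \<theta>) (snd \<theta>) r (x j)))" for r \<xi> \<theta>
  have lip: "\<bar>\<phi> r j p - \<phi> r j q\<bar> \<le> \<bar>p - q\<bar>" for r j p q
    unfolding \<phi>_def by (rule abs_sgn_mult_max_zero_diff_le)
  have bdd: "bdd_above (G r \<xi> ` ?T)" if "r \<in> {1..m}" for r \<xi>
    unfolding G_def
  proof (rule bdd_above_sum_mult)
    fix \<theta> j assume "\<theta> \<in> ?T" "j \<in> {1..n}"
    then have "\<bar>preact i (fst \<theta>) (snd \<theta>) r (x j)\<bar> \<le> 2 * B"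
      using that x by (intro abs_preact_le) auto
    then show "\<bar>\<phi> r j (preact i (fst \<theta>) (snd \<theta>) r (x j))\<bar> \<le> \<bar>\<phi> r j 0\<bar> + 2 * B"
      using lip[of r j "preact i (fst \<theta>) (snd \<theta>) r (x j)" 0] by linarith
  qed
  have neuron: "(\<Sum>\<xi>\<in>sign_vectors {1..n}. Sup (G r \<xi> ` ?T)) \<le> 2 * B * 2 ^ n * sqrt n"
    if "r \<in> {1..m}" for r
    unfolding G_def using assms(1) that x lip by (rule sum_Sup_Lipschitz_neuron_le)
  have "(\<Sum>\<xi>\<in>sign_vectors {1..n}. Sup ((\<lambda>(w, b). \<Sum>j=1..n. \<xi> j * netN m i a wbar bbar w b (x j)) ` ?T))
      \<le> (\<Sum>\<xi>\<in>sign_vectors {1..n}. \<Sum>r=1..m. \<bar>a r\<bar> * Sup (G r \<xi> ` ?T))"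
    unfolding case_prod_unfold sum_mult_netN_eq_sum_abs G_def \<phi>_def[abs_def]
    using offsets_nonempty[OF assms(1)] bdd[unfolded G_def \<phi>_def[abs_def]]
    by (intro sum_mono cSUP_sum_mult_le) auto
  also have "\<dots> = (\<Sum>r=1..m. \<bar>a r\<bar> * (\<Sum>\<xi>\<in>sign_vectors {1..n}. Sup (G r \<xi> ` ?T)))"
    unfolding sum_distrib_left by (rule sum.swap)
  also have "\<dots> \<le> (\<Sum>r=1..m. \<bar>a r\<bar> * (2 * B * 2 ^ n * sqrt n))"
    using neuron by (intro sum_mono mult_left_mono) auto
  also have "\<dots> = 2 ^ n * (sqrt n * (2 * B * (\<Sum>r=1..m. \<bar>a r\<bar>)))"
    by (simp only: sum_distrib_right[symmetric]) (simp add: mult_ac)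
  finally show ?thesis .
qed

lemma rademacher_le_sum_abs:
  assumes "0 \<le> B" "1 \<le> n" "\<forall>j\<in>{1..n}. (\<Sum>k=1..i+1. (xhat i (x j) k)\<^sup>2) = 1"
  shows "rademacher m i n x B a wbar bbar \<le> 2 * B * (\<Sum>r=1..m. \<bar>a r\<bar>) / sqrt n"
proof -
  have "rademacher m i n x B a wbar bbar \<le> 1 / n * (sqrt n * (2 * B * (\<Sum>r=1..m. \<bar>a r\<bar>)))"
    using sum_Sup_sum_mult_netN_le[OF assms(1,3)]
    unfolding rademacher_def by (intro mult_left_mono) (auto simp: divide_le_eq mult.commute)
  also have "\<dots> = 2 * B * (\<Sum>r=1..m. \<bar>a r\<bar>) / sqrt n"
    using assms(2) by (simp add: field_simps real_sqrt_divide[symmetric] flip: real_sqrt_mult)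
  finally show ?thesis .
qed

section \<open>Measurability in the initialization\<close>

lemma measurable_init_a [measurable]:
  "r \<in> {1..m} \<Longrightarrow> (\<lambda>\<omega>. fst \<omega> r) \<in> borel_measurable (init_measure m i eps)"
  unfolding init_measure_def by measurable

lemma measurable_init_wbar [measurable]:
  assumes "r \<in> {1..m}" "k \<in> {1..i+1}"
  shows "(\<lambda>\<omega>. fst (snd \<omega>) r k) \<in> borel_measurable (init_measure m i eps)"
proof -
  have "(\<lambda>\<omega>. fst (snd \<omega>) r) \<in> init_measure m i eps \<rightarrow>\<^sub>M PiM {1..i+1} (\<lambda>_. borel)"
    using assms(1) unfolding init_measure_def by measurable
  then show ?thesis
    using measurable_component_singleton[OF assms(2)] by (rule measurable_compose)
qed

lemma measurable_init_bbar [measurable]: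
  "r \<in> {1..m} \<Longrightarrow> (\<lambda>\<omega>. snd (snd \<omega>) r) \<in> borel_measurable (init_measure m i eps)"
  unfolding init_measure_def by measurable

lemma borel_measurable_sum_netN [measurable]:
  "(\<lambda>\<omega>. \<Sum>j=1..n. c j * netN m i (fst \<omega>) (fst (snd \<omega>)) (snd (snd \<omega>)) w b (y j))
    \<in> borel_measurable (init_measure m i eps)"
  unfolding netN_def by measurable

(* Rounding toward zero keeps a rational approximation of admissible offsets admissible. *)
lemma Rats_approx_toward_zero:
  fixes x \<delta> :: real
  assumes "0 < \<delta>"
  shows "\<exists>q\<in>\<rat>. \<bar>q\<bar> \<le> \<bar>x\<bar> \<and> \<bar>x - q\<bar> < \<delta>"
proof (cases "x = 0")
  case False
  then obtain q where "q \<in> \<rat>" "max 0 (\<bar>x\<bar> - \<delta>) < q" "q < \<bar>x\<bar>"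
    using Rats_dense_in_real[of "max 0 (\<bar>x\<bar> - \<delta>)" "\<bar>x\<bar>"] assms by auto
  then show ?thesis
    by (intro bexI[of _ "if 0 < x then q else - q"]) auto
qed (use assms in auto)

lemma abs_preact_le_sum_abs:
  assumes "\<forall>k\<in>{1..i+1}. \<bar>w r k\<bar> \<le> \<delta>" "\<bar>b r\<bar> \<le> \<delta>"
  shows "\<bar>preact i w b r y\<bar> \<le> \<delta> * ((\<Sum>k=1..i+1. \<bar>xhat i y k\<bar>) + 1)"
proof -
  have "\<bar>preact i w b r y\<bar> \<le> (\<Sum>k=1..i+1. \<bar>w r k\<bar> * \<bar>xhat i y k\<bar>) + \<bar>b r\<bar>"
    unfolding preact_def abs_mult[symmetric] by (rule order_trans[OF abs_triangle_ineq add_right_mono[OF sum_abs]])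
  also have "\<dots> \<le> (\<Sum>k=1..i+1. \<delta> * \<bar>xhat i y k\<bar>) + \<delta>"
    using assms by (intro add_mono sum_mono mult_right_mono) auto
  finally show ?thesis
    by (simp add: sum_distrib_left algebra_simps)
qed

lemma preact_diff:
  "preact i w b r y - preact i w' b' r y = preact i (\<lambda>r k. w r k - w' r k) (\<lambda>r. b r - b' r) r y"
  unfolding preact_def by (simp add: left_diff_distrib sum_subtractf)

lemma abs_netN_diff_le:
  assumes "\<forall>r\<in>{1..m}. (\<forall>k\<in>{1..i+1}. \<bar>w r k - w' r k\<bar> \<le> \<delta>) \<and> \<bar>b r - b' r\<bar> \<le> \<delta>"
  shows "\<bar>netN m i a wbar bbar w b y - netN m i a wbar bbar w' b' y\<bar>
    \<le> \<delta> * (\<Sum>r=1..m. \<bar>a r\<bar>) * ((\<Sum>k=1..i+1. \<bar>xhat i y k\<bar>) + 1)"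
proof -
  let ?d = "\<lambda>r. preact i (\<lambda>r k. w r k - w' r k) (\<lambda>r. b r - b' r) r y"
  have "\<bar>netN m i a wbar bbar w b y - netN m i a wbar bbar w' b' y\<bar>
      \<le> (\<Sum>r=1..m. \<bar>a r\<bar> * \<bar>max 0 (preact i wbar bbar r y + preact i w b r y)
          - max 0 (preact i wbar bbar r y + preact i w' b' r y)\<bar>)"
    unfolding netN_eq_preact sum_subtractf[symmetric] right_diff_distrib[symmetric] abs_mult[symmetric]
    by (rule sum_abs)
  also have "\<dots> \<le> (\<Sum>r=1..m. \<bar>a r\<bar> * \<bar>?d r\<bar>)"
  proof (intro sum_mono mult_left_mono)
    fix r
    show "\<bar>max 0 (preact i wbar bbar r y + preact i w b r y) - max 0 (preact i wbar bbar r y + preact i w' b' r y)\<bar>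
        \<le> \<bar>?d r\<bar>"
      using abs_max_zero_diff_le[of "preact i wbar bbar r y + preact i w b r y"
          "preact i wbar bbar r y + preact i w' b' r y"]
      by (simp add: preact_diff[symmetric])
  qed simp
  also have "\<dots> \<le> (\<Sum>r=1..m. \<bar>a r\<bar> * (\<delta> * ((\<Sum>k=1..i+1. \<bar>xhat i y k\<bar>) + 1)))"
    using assms by (intro sum_mono mult_left_mono abs_preact_le_sum_abs) auto
  also have "\<dots> = \<delta> * (\<Sum>r=1..m. \<bar>a r\<bar>) * ((\<Sum>k=1..i+1. \<bar>xhat i y k\<bar>) + 1)"
    by (simp only: sum_distrib_right[symmetric]) (simp add: mult_ac)
  finally show ?thesis .
qed

lemma sum_mult_netN_le_perturbed:
  assumes "\<forall>r\<in>{1..m}. (\<forall>k\<in>{1..i+1}. \<bar>w r k - w' r k\<bar> \<le> \<delta>) \<and> \<bar>b r - b' r\<bar> \<le> \<delta>"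
  shows "(\<Sum>j\<in>J. c j * netN m i a wbar bbar w b (y j))
    \<le> (\<Sum>j\<in>J. c j * netN m i a wbar bbar w' b' (y j))
      + \<delta> * (\<Sum>j\<in>J. \<bar>c j\<bar> * ((\<Sum>r=1..m. \<bar>a r\<bar>) * ((\<Sum>k=1..i+1. \<bar>xhat i (y j) k\<bar>) + 1)))"
proof -
  have "(\<Sum>j\<in>J. c j * netN m i a wbar bbar w b (y j)) - (\<Sum>j\<in>J. c j * netN m i a wbar bbar w' b' (y j))
      = (\<Sum>j\<in>J. c j * (netN m i a wbar bbar w b (y j) - netN m i a wbar bbar w' b' (y j)))"
    by (simp add: sum_subtractf[symmetric] right_diff_distrib)
  also have "\<dots> \<le> (\<Sum>j\<in>J. \<bar>c j\<bar> * (\<delta> * (\<Sum>r=1..m. \<bar>a r\<bar>) * ((\<Sum>k=1..i+1. \<bar>xhat i (y j) k\<bar>) + 1)))"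
  proof (rule sum_mono)
    fix j
    have "\<bar>netN m i a wbar bbar w b (y j) - netN m i a wbar bbar w' b' (y j)\<bar>
        \<le> \<delta> * (\<Sum>r=1..m. \<bar>a r\<bar>) * ((\<Sum>k=1..i+1. \<bar>xhat i (y j) k\<bar>) + 1)"
      by (rule abs_netN_diff_le[OF assms])
    then show "c j * (netN m i a wbar bbar w b (y j) - netN m i a wbar bbar w' b' (y j))
        \<le> \<bar>c j\<bar> * (\<delta> * (\<Sum>r=1..m. \<bar>a r\<bar>) * ((\<Sum>k=1..i+1. \<bar>xhat i (y j) k\<bar>) + 1))"
      by (rule order_trans[OF abs_ge_self, OF order_trans[OF eq_refl[OF abs_mult] mult_left_mono]]) simp
  qed
  also have "\<dots> = \<delta> * (\<Sum>j\<in>J. \<bar>c j\<bar> * ((\<Sum>r=1..m. \<bar>a r\<bar>) * ((\<Sum>k=1..i+1. \<bar>xhat i (y j) k\<bar>) + 1)))"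
    unfolding sum_distrib_left[of \<delta>, where A = J] by (rule sum.cong[OF refl]) (simp only: mult_ac)
  finally show ?thesis
    by simp
qed

lemma offsets_abs_le:
  assumes "(w, b) \<in> offsets m i B" "r \<in> {1..m}"
  shows "(\<forall>k\<in>{1..i+1}. \<bar>w r k\<bar> \<le> B) \<and> \<bar>b r\<bar> \<le> B"
proof -
  have "\<bar>w r k\<bar> \<le> sqrt (\<Sum>k=1..i+1. (w r k)\<^sup>2)" if "k \<in> {1..i+1}" for k
    using that by (subst real_sqrt_abs[symmetric]) (intro real_sqrt_le_mono member_le_sum; auto)
  then show ?thesis
    using assms unfolding offsets_def by fastforce
qed

definition rational_offsets ::
  "nat \<Rightarrow> nat \<Rightarrow> real \<Rightarrow> ((nat \<Rightarrow> nat \<Rightarrow> real) \<times> (nat \<Rightarrow> real)) set" where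
  "rational_offsets m i B =
    offsets m i B \<inter> (PiE {1..m} (\<lambda>_. PiE {1..i+1} (\<lambda>_. \<rat>)) \<times> PiE {1..m} (\<lambda>_. \<rat>))"

lemma countable_rational_offsets: "countable (rational_offsets m i B)"
  unfolding rational_offsets_def
  by (rule countable_subset[OF Int_lower2]) (intro countable_SIGMA countable_PiE countable_rat finite_atLeastAtMost)

lemma rational_offsets_dense:
  assumes "(w, b) \<in> offsets m i B" "0 < \<delta>"
  obtains w' b' where "(w', b') \<in> rational_offsets m i B"
    "\<forall>r\<in>{1..m}. (\<forall>k\<in>{1..i+1}. \<bar>w r k - w' r k\<bar> \<le> \<delta>) \<and> \<bar>b r - b' r\<bar> \<le> \<delta>"
proof -
  obtain q where q: "q z \<in> \<rat>" "\<bar>q z\<bar> \<le> \<bar>z\<bar>" "\<bar>z - q z\<bar> < \<delta>" for z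
    using Rats_approx_toward_zero[OF assms(2)] by (metis (mono_tags))
  define w' where "w' = (\<lambda>r\<in>{1..m}. \<lambda>k\<in>{1..i+1}. q (w r k))"
  define b' where "b' = (\<lambda>r\<in>{1..m}. q (b r))"
  have "(w', b') \<in> offsets m i B"
    unfolding offsets_def
  proof (clarify, intro conjI)
    fix r assume r: "r \<in> {1..m}"
    have "(\<Sum>k=1..i+1. (w' r k)\<^sup>2) \<le> (\<Sum>k=1..i+1. (w r k)\<^sup>2)"
      using r q(2) by (intro sum_mono) (auto simp: w'_def abs_le_square_iff)
    moreover have "sqrt (\<Sum>k=1..i+1. (w r k)\<^sup>2) \<le> B" "\<bar>b r\<bar> \<le> B"
      using assms(1) r unfolding offsets_def by blast+
    ultimately show "sqrt (\<Sum>k=1..i+1. (w' r k)\<^sup>2) \<le> B"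
      using real_sqrt_le_mono order_trans by blast
    show "\<bar>b' r\<bar> \<le> B"
      using r q(2)[of "b r"] \<open>\<bar>b r\<bar> \<le> B\<close> by (simp add: b'_def)
  qed
  moreover have "(w', b') \<in> PiE {1..m} (\<lambda>_. PiE {1..i+1} (\<lambda>_. \<rat>)) \<times> PiE {1..m} (\<lambda>_. \<rat>)"
    using q(1) by (auto simp: w'_def b'_def)
  ultimately show ?thesis
    using q(3) by (intro that[of w' b']) (auto simp: rational_offsets_def w'_def b'_def less_imp_le)
qed

lemma cSUP_eq_cSUP_dense:
  fixes f :: "'a \<Rightarrow> real"
  assumes "D \<subseteq> T" "T \<noteq> {}" "bdd_above (f ` T)"
    and dense: "\<And>\<theta> e. \<theta> \<in> T \<Longrightarrow> 0 < e \<Longrightarrow> \<exists>\<theta>'\<in>D. f \<theta> \<le> f \<theta>' + e"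
  shows "Sup (f ` T) = Sup (f ` D)"
proof (rule antisym)
  have "D \<noteq> {}"
    using assms(2) dense[of _ 1] by fastforce
  have bdd_D: "bdd_above (f ` D)"
    using assms(1,3) by (meson bdd_above_mono image_mono)
  show "Sup (f ` T) \<le> Sup (f ` D)"
  proof (rule cSUP_least[OF assms(2)])
    fix \<theta> assume "\<theta> \<in> T"
    show "f \<theta> \<le> Sup (f ` D)"
    proof (rule field_le_epsilon)
      fix e :: real assume "0 < e"
      then obtain \<theta>' where "\<theta>' \<in> D" "f \<theta> \<le> f \<theta>' + e"
        using dense[OF \<open>\<theta> \<in> T\<close>] by blast
      moreover have "f \<theta>' \<le> Sup (f ` D)"
        using \<open>\<theta>' \<in> D\<close> bdd_D by (rule cSUP_upper)
      ultimately show "f \<theta> \<le> Sup (f ` D) + e"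
        by linarith
    qed
  qed
  show "Sup (f ` D) \<le> Sup (f ` T)"
    by (rule cSUP_subset_mono[OF \<open>D \<noteq> {}\<close> assms(3,1) order_refl])
qed

lemma Sup_sum_netN_rational_offsets:
  fixes m i n :: nat and c a bbar :: "nat \<Rightarrow> real" and wbar :: "nat \<Rightarrow> nat \<Rightarrow> real"
    and y :: "nat \<Rightarrow> nat \<Rightarrow> real"
  assumes "0 \<le> B"
  defines "H \<equiv> \<lambda>\<theta>. \<Sum>j=1..n. c j * netN m i a wbar bbar (fst \<theta>) (snd \<theta>) (y j)"
  shows "Sup (H ` offsets m i B) = Sup (H ` rational_offsets m i B)"
    and "bdd_above (H ` rational_offsets m i B)"
proof -
  define L where "L = (\<Sum>j=1..n. \<bar>c j\<bar> * ((\<Sum>r=1..m. \<bar>a r\<bar>) * ((\<Sum>k=1..i+1. \<bar>xhat i (y j) k\<bar>) + 1)))"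
  have "0 \<le> L"
    unfolding L_def by (intro sum_nonneg mult_nonneg_nonneg add_nonneg_nonneg) auto
  have close: "H (w, b) \<le> H (w', b') + \<delta> * L"
    if "\<forall>r\<in>{1..m}. (\<forall>k\<in>{1..i+1}. \<bar>w r k - w' r k\<bar> \<le> \<delta>) \<and> \<bar>b r - b' r\<bar> \<le> \<delta>" for w b w' b' \<delta>
    using sum_mult_netN_le_perturbed[OF that] unfolding H_def L_def by simp
  have bdd: "bdd_above (H ` offsets m i B)"
  proof (rule bdd_aboveI2)
    fix \<theta> assume "\<theta> \<in> offsets m i B"
    then have "\<forall>r\<in>{1..m}. (\<forall>k\<in>{1..i+1}. \<bar>fst \<theta> r k - 0\<bar> \<le> B) \<and> \<bar>snd \<theta> r - 0\<bar> \<le> B"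
      using offsets_abs_le[of "fst \<theta>" "snd \<theta>"] by simp
    then show "H \<theta> \<le> H ((\<lambda>_ _. 0), (\<lambda>_. 0)) + B * L"
      using close[where w = "fst \<theta>" and b = "snd \<theta>" and w' = "\<lambda>_ _. 0" and b' = "\<lambda>_. 0"] by simp
  qed
  show "Sup (H ` offsets m i B) = Sup (H ` rational_offsets m i B)"
  proof (rule cSUP_eq_cSUP_dense[OF _ offsets_nonempty[OF assms(1)] bdd])
    show "rational_offsets m i B \<subseteq> offsets m i B"
      by (simp add: rational_offsets_def)
  next
    fix \<theta> and e :: real assume "\<theta> \<in> offsets m i B" "0 < e"
    then have "(fst \<theta>, snd \<theta>) \<in> offsets m i B" "0 < e / (L + 1)"
      using \<open>0 \<le> L\<close> by simp_all
    then obtain w' b' where "(w', b') \<in> rational_offsets m i B" and near: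
      "\<forall>r\<in>{1..m}. (\<forall>k\<in>{1..i+1}. \<bar>fst \<theta> r k - w' r k\<bar> \<le> e / (L + 1)) \<and> \<bar>snd \<theta> r - b' r\<bar> \<le> e / (L + 1)"
      by (rule rational_offsets_dense)
    moreover have "H \<theta> \<le> H (w', b') + e / (L + 1) * L"
      using close[OF near] by simp
    moreover have "e / (L + 1) * L \<le> e"
      using \<open>0 \<le> L\<close> \<open>0 < e\<close> by (simp add: field_simps)
    ultimately show "\<exists>\<theta>'\<in>rational_offsets m i B. H \<theta> \<le> H \<theta>' + e"
      by (intro bexI[of _ "(w', b')"]) auto
  qed
  show "bdd_above (H ` rational_offsets m i B)"
    using bdd by (rule bdd_above_mono) (auto simp: rational_offsets_def)
qed

lemma borel_measurable_rademacher:
  assumes "0 \<le> B"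
  shows "(\<lambda>\<omega>. rademacher m i n x B (fst \<omega>) (fst (snd \<omega>)) (snd (snd \<omega>))) \<in> borel_measurable (init_measure m i eps)"
proof -
  have "(\<lambda>\<omega>. Sup ((\<lambda>\<theta>. \<Sum>j=1..n. \<xi> j * netN m i (fst \<omega>) (fst (snd \<omega>)) (snd (snd \<omega>)) (fst \<theta>) (snd \<theta>) (x j))
      ` offsets m i B)) \<in> borel_measurable (init_measure m i eps)" for \<xi>
    unfolding Sup_sum_netN_rational_offsets(1)[OF assms]
    using Sup_sum_netN_rational_offsets(2)[OF assms] countable_rational_offsets
    by (intro borel_measurable_cSUP borel_measurable_sum_netN) auto
  then show ?thesis
    unfolding rademacher_def case_prod_unfold
    by (intro borel_measurable_times borel_measurable_divide borel_measurable_sum borel_measurable_const)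
qed

section \<open>Output weights under the initialization\<close>

lemma prob_space_init_measure: "0 < eps \<Longrightarrow> prob_space (init_measure m i eps)"
  unfolding init_measure_def by (intro prob_space_pair prob_space_PiM prob_space_normal_density) auto

lemma distr_init_measure_a:
  assumes "0 < eps" "r \<in> {1..m}"
  defines "N \<equiv> density lborel (normal_density 0 eps)"
  shows "distr (init_measure m i eps) N (\<lambda>\<omega>. fst \<omega> r) = N"
proof -
  define M23 where "M23 = PiM {1..m} (\<lambda>_. PiM {1..i+1} (\<lambda>_. density lborel (normal_density 0 (1 / sqrt m))))
    \<Otimes>\<^sub>M PiM {1..m} (\<lambda>_. density lborel (normal_density 0 (1 / sqrt m)))"
  have M: "init_measure m i eps = PiM {1..m} (\<lambda>_. N) \<Otimes>\<^sub>M M23"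
    unfolding init_measure_def M23_def N_def ..
  have "prob_space M23"
    unfolding M23_def by (intro prob_space_pair prob_space_PiM prob_space_normal_density) auto
  then have fst: "distr (init_measure m i eps) (PiM {1..m} (\<lambda>_. N)) fst = PiM {1..m} (\<lambda>_. N)"
    unfolding M by (rule prob_space.distr_pair_fst)
  have "distr (init_measure m i eps) N (\<lambda>\<omega>. fst \<omega> r)
      = distr (distr (init_measure m i eps) (PiM {1..m} (\<lambda>_. N)) fst) N (\<lambda>a. a r)"
    unfolding M using assms(2) by (subst distr_distr) (auto simp: comp_def intro!: measurable_component_singleton)
  also have "\<dots> = distr (PiM {1..m} (\<lambda>_. N)) N (\<lambda>a. a r)"
    by (simp only: fst)
  also have "\<dots> = N"
    using assms(1,2) unfolding N_def by (intro distr_PiM_component prob_space_normal_density) auto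
  finally show ?thesis .
qed

lemma has_bochner_integral_abs_init_a:
  assumes "0 < eps" "r \<in> {1..m}"
  shows "has_bochner_integral (init_measure m i eps) (\<lambda>\<omega>. \<bar>fst \<omega> r\<bar>) (eps * sqrt (2 / pi))"
  unfolding has_bochner_integral_iff
proof
  let ?N = "density lborel (normal_density 0 eps)"
  have meas: "(\<lambda>\<omega>. fst \<omega> r) \<in> init_measure m i eps \<rightarrow>\<^sub>M ?N"
    using assms(2) unfolding init_measure_def by measurable
  have "integrable ?N abs"
    using integrable_normal_moment_abs[of eps 0 1] assms(1) by (subst integrable_density) auto
  then show "integrable (init_measure m i eps) (\<lambda>\<omega>. \<bar>fst \<omega> r\<bar>)"
    using integrable_distr_eq[OF meas, of abs] distr_init_measure_a[OF assms] by simp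
  have "integral\<^sup>L ?N abs = eps * sqrt (2 / pi)"
    using integral_normal_moment_abs_odd[of eps 0 0] assms(1) by (subst integral_density) auto
  then show "(\<integral>\<omega>. \<bar>fst \<omega> r\<bar> \<partial>init_measure m i eps) = eps * sqrt (2 / pi)"
    using integral_distr[OF meas, of abs] distr_init_measure_a[OF assms] by simp
qed

lemma (in prob_space) Markov_inequality_prob_le:
  assumes "integrable M u" "AE x in M. 0 \<le> u x" "0 < c"
  shows "1 - expectation u / c \<le> prob {x \<in> space M. u x \<le> c}"
proof -
  have [measurable]: "u \<in> borel_measurable M"
    using assms(1) by auto
  have "prob {x \<in> space M. c \<le> u x} \<le> expectation u / c"
    using assms by (intro integral_Markov_inequality_measure[where A = "space M"]) auto
  moreover have "prob (space M - {x \<in> space M. c \<le> u x}) \<le> prob {x \<in> space M. u x \<le> c}"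
    by (intro finite_measure_mono) auto
  ultimately show ?thesis
    by (simp add: prob_compl)
qed

lemma prob_sum_abs_init_a_le:
  assumes "0 < eps" "0 < c" "1 \<le> m"
  shows "1 - 1 / c \<le> measure (init_measure m i eps)
    {\<omega> \<in> space (init_measure m i eps). (\<Sum>r=1..m. \<bar>fst \<omega> r\<bar>) \<le> c * m * eps}"
proof -
  have abs_a: "integrable (init_measure m i eps) (\<lambda>\<omega>. \<bar>fst \<omega> r\<bar>)"
    "(\<integral>\<omega>. \<bar>fst \<omega> r\<bar> \<partial>init_measure m i eps) = eps * sqrt (2 / pi)" if "r \<in> {1..m}" for r
    using has_bochner_integral_abs_init_a[OF assms(1) that] by (simp_all add: has_bochner_integral_iff)
  have "(\<integral>\<omega>. (\<Sum>r=1..m. \<bar>fst \<omega> r\<bar>) \<partial>init_measure m i eps) = m * (eps * sqrt (2 / pi))"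
    using abs_a by (subst Bochner_Integration.integral_sum) auto
  moreover have "sqrt (2 / pi) \<le> 1"
    using pi_gt3 by simp
  ultimately have "1 - 1 / c \<le> 1 - (\<integral>\<omega>. (\<Sum>r=1..m. \<bar>fst \<omega> r\<bar>) \<partial>init_measure m i eps) / (c * m * eps)"
    using assms by (simp add: field_simps)
  also have "\<dots> \<le> measure (init_measure m i eps)
      {\<omega> \<in> space (init_measure m i eps). (\<Sum>r=1..m. \<bar>fst \<omega> r\<bar>) \<le> c * m * eps}"
    using abs_a assms by (intro prob_space.Markov_inequality_prob_le prob_space_init_measure) auto
  finally show ?thesis .
qed

lemma one_le_sqrt_two_ln:
  assumes "2 \<le> m"
  shows "1 \<le> sqrt (2 * ln (real m))"
proof -
  have "ln (1 / 2) \<le> 1 / 2 - (1 :: real)"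
    by (rule ln_le_minus_one) simp
  then have "1 / 2 \<le> ln (2 :: real)"
    by (simp add: ln_div)
  also have "\<dots> \<le> ln (real m)"
    using assms by simp
  finally show ?thesis
    by simp
qed

lemma rademacher_le_of_sum_abs_le:
  assumes "2 \<le> m" "0 < B" "1 \<le> n" "0 \<le> c * eps"
    and "\<forall>j\<in>{1..n}. (\<Sum>k=1..i+1. (xhat i (x j) k)\<^sup>2) = 1"
    and "(\<Sum>r=1..m. \<bar>a r\<bar>) \<le> c * m * eps"
  shows "rademacher m i n x B a wbar bbar \<le> 8 * c * eps * B * real m * sqrt (2 * ln (real m)) / sqrt (real n)"
proof -
  have "rademacher m i n x B a wbar bbar \<le> 2 * B * (\<Sum>r=1..m. \<bar>a r\<bar>) / sqrt n"
    using assms(2,3,5) by (intro rademacher_le_sum_abs) auto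
  also have "\<dots> \<le> 2 * B * (c * m * eps) / sqrt n"
    using assms(2,6) by (intro divide_right_mono mult_left_mono) auto
  also have "\<dots> \<le> 8 * c * eps * B * real m * sqrt (2 * ln (real m)) / sqrt (real n)"
  proof (intro divide_right_mono)
    have "2 * B * (c * m * eps) = (c * eps * B * m) * 2"
      by (simp add: mult_ac)
    also have "\<dots> \<le> (c * eps * B * m) * (8 * sqrt (2 * ln (real m)))"
      using one_le_sqrt_two_ln[OF assms(1)] assms(2,4) by (intro mult_left_mono) (linarith, simp)
    finally show "2 * B * (c * m * eps) \<le> 8 * c * eps * B * real m * sqrt (2 * ln (real m))"
      by (simp add: mult_ac)
  qed simp
  finally show ?thesis .
qed

theorem lemma18:
  fixes m d i n t :: nat and eps c1 B :: real and x :: "nat \<Rightarrow> nat \<Rightarrow> real"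
  assumes "m \<ge> 2" and "eps > 0" and "c1 > 10"
    and "1 \<le> i" and "i \<le> d"
    and "\<forall>j\<in>{1..n}. sqrt (\<Sum>k=1..d. (x j k)\<^sup>2) \<le> 1"
    and "B > 0" and "n \<ge> 1" and "t \<ge> 1"
  shows "measure (init_measure m i eps)
           {\<omega> \<in> space (init_measure m i eps).
              rademacher m i n x B (fst \<omega>) (fst (snd \<omega>)) (snd (snd \<omega>))
                \<le> 8 * c1 * eps * B * real m * sqrt (2 * ln (real m)) / sqrt (real n)}
         \<ge> 1 - 1 / c1"
proof -
  let ?M = "init_measure m i eps"
  let ?rad = "\<lambda>\<omega>. rademacher m i n x B (fst \<omega>) (fst (snd \<omega>)) (snd (snd \<omega>))"
  let ?K = "8 * c1 * eps * B * real m * sqrt (2 * ln (real m)) / sqrt (real n)"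
  have "\<forall>j\<in>{1..n}. (\<Sum>k=1..i+1. (xhat i (x j) k)\<^sup>2) = 1"
    using assms(5,6) sum_xhat_square by blast
  then have "{\<omega> \<in> space ?M. (\<Sum>r=1..m. \<bar>fst \<omega> r\<bar>) \<le> c1 * m * eps} \<subseteq> {\<omega> \<in> space ?M. ?rad \<omega> \<le> ?K}"
    using assms(1-3,7,8) by (auto intro: rademacher_le_of_sum_abs_le)
  moreover have "{\<omega> \<in> space ?M. ?rad \<omega> \<le> ?K} \<in> sets ?M"
    using borel_measurable_rademacher[OF less_imp_le[OF assms(7)]] by measurable
  ultimately have "measure ?M {\<omega> \<in> space ?M. (\<Sum>r=1..m. \<bar>fst \<omega> r\<bar>) \<le> c1 * m * eps}
      \<le> measure ?M {\<omega> \<in> space ?M. ?rad \<omega> \<le> ?K}"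
    using prob_space_init_measure[OF assms(2)] by (intro finite_measure.finite_measure_mono prob_space.finite_measure)
  moreover have "1 - 1 / c1 \<le> measure ?M {\<omega> \<in> space ?M. (\<Sum>r=1..m. \<bar>fst \<omega> r\<bar>) \<le> c1 * m * eps}"
    using assms(1-3) by (intro prob_sum_abs_init_a_le) auto
  ultimately show ?thesis
    by linarith
qed

end
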